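(* In the half-line setting, let $\mathcal{S}=\{j\ge0:r_j>0\}=\{j_1<j_2<\cdots\}$ (finite or infinite). For each $k$ such that $j_{k+1}$ exists define $$\eta_k=(-1)^{j_k}Q_{j_k}\Big(-\sqrt{\tfrac{p_{j_k}\tilde q_{j_k}}{r_{j_k}}}\,|j_k;O\rangle+\sqrt{\tilde q_{j_k}}\,|j_k;R\rangle\Big)+\sum_{l=j_k+1}^{j_{k+1}-1}(-1)^lQ_l\big(-\sqrt{p_l}|l;L\rangle+\sqrt{q_l}|l;R\rangle\big)+(-1)^{j_{k+1}}Q_{j_{k+1}}\Big(-\sqrt{p_{j_{k+1}}}\,|j_{k+1};L\rangle+\sqrt{\tfrac{p_{j_{k+1}}q_{j_{k+1}}}{r_{j_{k+1}}}}\,|j_{k+1};O\rangle\Big),$$ and, if $|\mathcal{S}|=n<\infty$, define the formal vector $$\eta_n=(-1)^{j_n}Q_{j_n}\Big(-\sqrt{\tfrac{p_{j_n}\tilde q_{j_n}}{r_{j_n}}}\,|j_n;O\rangle+\sqrt{\tilde q_{j_n}}\,|j_n;R\rangle\Big)+\sum_{l=j_n+1}^{\infty}(-1)^lQ_l\big(-\sqrt{p_l}|l;L\rangle+\sqrt{q_l}|l;R\rangle\big).$$ Then a vector $\phi\in\ell^2(A)$ lies in $\mathcal{H}^{(S)}$ if and only if $\phi=\sum_k c_k\eta_k$ (coefficientwise; each arc lies in the support of at most two $\eta_k$) for some complex numbers $c_k$. In particular $\mathcal{H}^{(S)}=\{0\}$ if $\mathcal{S}=\emptyset$. Moreover every $\eta_k$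 that belongs to $\ell^2(A)$ satisfies $U\eta_k=-\eta_k$.
   Context: Half-line setting: $V=\mathbb{Z}_+$, parameters $p_j,q_j,r_j\ge0$ with $p_j+q_j+r_j=1$, $q_0=0$, $p_j>0$ ($j\ge0$), $q_j>0$ ($j\ge1$). Arcs: $|j;R\rangle=\delta_{(j+1,j)}$ ($j\ge0$), $|j;L\rangle=\delta_{(j-1,j)}$ ($j\ge1$), $|j;O\rangle=\delta_{(j,j)}$ when $r_j>0$; arc $(u,v)$ goes from $v$ to $u$. Shift $S$: $|j;R\rangle\leftrightarrow|j+1;L\rangle$, $|j;O\rangle\mapsto|j;O\rangle$. $a_j=\sqrt{q_j}|j;L\rangle+\sqrt{r_j}|j;O\rangle+\sqrt{p_j}|j;R\rangle$, $b_j=Sa_j$. $\Pi_A$ is the orthogonal projection onto the closed span of $\{a_j\}$, $C=2\Pi_A-I$, $U=SC$. $\mathcal{H}^{(R)}$ is the closed span of $\{a_j,b_j:j\ge0\}$ and $\mathcal{H}^{(S)}=(\mathcal{H}^{(R)})^\perp$. $Q_0=1$ and $Q_j=\sqrt{\frac{q_1\cdots q_j}{p_1\cdots p_j\,q_j}}$ for $j\ge1$; $\tilde q_j=q_j$ for $j\ge1$ and $\tilde q_0=1$. *)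

theory Defs
  imports "HOL-Analysis.Analysis"
begin

text \<open>Half-line quantum walk.  Arcs are pairs (u,v) of naturals (arc from v to u);
  vectors are functions on nat \<times> nat vanishing outside the arc set.
  Parameters p q r :: nat \<Rightarrow> real.\<close>

definition arcs :: "(nat \<Rightarrow> real) \<Rightarrow> (nat \<times> nat) set" where
  "arcs r = {(Suc j, j) | j. True} \<union> {(j - 1, j) | j. j \<ge> 1} \<union> {(j, j) | j. r j > 0}"

definition ell2A :: "(nat \<Rightarrow> real) \<Rightarrow> (nat \<times> nat \<Rightarrow> complex) set" where
  "ell2A r = {\<phi>. (\<forall>e. e \<notin> arcs r \<longrightarrow> \<phi> e = 0) \<and> (\<lambda>e. (cmod (\<phi> e))\<^sup>2) summable_on UNIV}"

definition inner2 :: "(nat \<times> nat \<Rightarrow> complex) \<Rightarrow> (nat \<times> nat \<Rightarrow> complex) \<Rightarrow> complex" where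
  "inner2 \<phi> \<psi> = (\<Sum>\<^sub>\<infinity>e. cnj (\<phi> e) * \<psi> e)"

definition norm2 :: "(nat \<times> nat \<Rightarrow> complex) \<Rightarrow> real" where
  "norm2 \<phi> = sqrt (\<Sum>\<^sub>\<infinity>e. (cmod (\<phi> e))\<^sup>2)"

definition finspan :: "(nat \<times> nat \<Rightarrow> complex) set \<Rightarrow> (nat \<times> nat \<Rightarrow> complex) set" where
  "finspan X = {(\<lambda>e. \<Sum>x\<in>F. c x * x e) | F c. finite F \<and> F \<subseteq> X}"

definition cspan :: "(nat \<Rightarrow> real) \<Rightarrow> (nat \<times> nat \<Rightarrow> complex) set \<Rightarrow> (nat \<times> nat \<Rightarrow> complex) set" where
  "cspan r X = {\<psi> \<in> ell2A r. \<forall>\<epsilon>::real. \<epsilon> > 0 \<longrightarrow> (\<exists>f\<in>finspan X. norm2 (\<lambda>e. \<psi> e - f e) < \<epsilon>)}"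

definition orth :: "(nat \<Rightarrow> real) \<Rightarrow> (nat \<times> nat \<Rightarrow> complex) set \<Rightarrow> (nat \<times> nat \<Rightarrow> complex) set" where
  "orth r Y = {\<phi> \<in> ell2A r. \<forall>\<psi>\<in>Y. inner2 \<psi> \<phi> = 0}"

definition proj :: "(nat \<Rightarrow> real) \<Rightarrow> (nat \<times> nat \<Rightarrow> complex) set \<Rightarrow> (nat \<times> nat \<Rightarrow> complex) \<Rightarrow> (nat \<times> nat \<Rightarrow> complex)" where
  "proj r X \<phi> = (THE \<psi>. \<psi> \<in> cspan r X \<and> (\<forall>g\<in>cspan r X. inner2 g (\<lambda>e. \<phi> e - \<psi> e) = 0))"

definition shift :: "(nat \<times> nat \<Rightarrow> complex) \<Rightarrow> (nat \<times> nat \<Rightarrow> complex)" where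
  "shift \<phi> = (\<lambda>(u, v). \<phi> (v, u))"

definition avec :: "(nat \<Rightarrow> real) \<Rightarrow> (nat \<Rightarrow> real) \<Rightarrow> (nat \<Rightarrow> real) \<Rightarrow> nat \<Rightarrow> (nat \<times> nat \<Rightarrow> complex)" where
  "avec p q r j = (\<lambda>(u, v). if v \<noteq> j then 0
      else if u = Suc j then complex_of_real (sqrt (p j))
      else if u = j \<and> r j > 0 then complex_of_real (sqrt (r j))
      else if Suc u = j then complex_of_real (sqrt (q j))
      else 0)"

definition bvec :: "(nat \<Rightarrow> real) \<Rightarrow> (nat \<Rightarrow> real) \<Rightarrow> (nat \<Rightarrow> real) \<Rightarrow> nat \<Rightarrow> (nat \<times> nat \<Rightarrow> complex)" where
  "bvec p q r j = shift (avec p q r j)"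

definition HR :: "(nat \<Rightarrow> real) \<Rightarrow> (nat \<Rightarrow> real) \<Rightarrow> (nat \<Rightarrow> real) \<Rightarrow> (nat \<times> nat \<Rightarrow> complex) set" where
  "HR p q r = cspan r (range (avec p q r) \<union> range (bvec p q r))"

definition HS :: "(nat \<Rightarrow> real) \<Rightarrow> (nat \<Rightarrow> real) \<Rightarrow> (nat \<Rightarrow> real) \<Rightarrow> (nat \<times> nat \<Rightarrow> complex) set" where
  "HS p q r = orth r (HR p q r)"

definition Uop :: "(nat \<Rightarrow> real) \<Rightarrow> (nat \<Rightarrow> real) \<Rightarrow> (nat \<Rightarrow> real) \<Rightarrow> (nat \<times> nat \<Rightarrow> complex) \<Rightarrow> (nat \<times> nat \<Rightarrow> complex)" where
  "Uop p q r \<phi> = shift (\<lambda>e. 2 * proj r (range (avec p q r)) \<phi> e - \<phi> e)"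

definition Qc :: "(nat \<Rightarrow> real) \<Rightarrow> (nat \<Rightarrow> real) \<Rightarrow> nat \<Rightarrow> real" where
  "Qc p q j = (if j = 0 then 1 else sqrt ((\<Prod>i=1..j. q i) / ((\<Prod>i=1..j. p i) * q j)))"

definition qt :: "(nat \<Rightarrow> real) \<Rightarrow> nat \<Rightarrow> real" where
  "qt q j = (if j = 0 then 1 else q j)"

definition Sset :: "(nat \<Rightarrow> real) \<Rightarrow> nat set" where
  "Sset r = {j. r j > 0}"

text \<open>k-th element (0-indexed) of Sset r in increasing order.\<close>
definition sj :: "(nat \<Rightarrow> real) \<Rightarrow> nat \<Rightarrow> nat" where
  "sj r k = (LEAST j. j \<in> Sset r \<and> card {i \<in> Sset r. i < j} = k)"

definition Kset :: "(nat \<Rightarrow> real) \<Rightarrow> nat set" where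
  "Kset r = {k. infinite (Sset r) \<or> k < card (Sset r)}"

text \<open>The vector starting at the O-arc of j and ending at the O-arc of t
  (ub = Some t), or extending to infinity (ub = None).\<close>
definition eta_gen :: "(nat \<Rightarrow> real) \<Rightarrow> (nat \<Rightarrow> real) \<Rightarrow> (nat \<Rightarrow> real) \<Rightarrow> nat \<Rightarrow> nat option \<Rightarrow> (nat \<times> nat \<Rightarrow> complex)" where
  "eta_gen p q r j ub = (\<lambda>(u, v). complex_of_real ((-1) ^ v * Qc p q v *
      (if v = j then
         (if u = j then - sqrt (p j * qt q j / r j)
          else if u = Suc j then sqrt (qt q j) else 0)
       else if j < v \<and> (case ub of None \<Rightarrow> True | Some t \<Rightarrow> v < t) then
         (if Suc u = v then - sqrt (p v) else if u = Suc v then sqrt (q v) else 0)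
       else if ub = Some v then
         (if Suc u = v then - sqrt (p v) else if u = v then sqrt (p v * q v / r v) else 0)
       else 0)))"

definition eta :: "(nat \<Rightarrow> real) \<Rightarrow> (nat \<Rightarrow> real) \<Rightarrow> (nat \<Rightarrow> real) \<Rightarrow> nat \<Rightarrow> (nat \<times> nat \<Rightarrow> complex)" where
  "eta p q r k = (if infinite (Sset r) \<or> Suc k < card (Sset r)
                  then eta_gen p q r (sj r k) (Some (sj r (Suc k)))
                  else eta_gen p q r (sj r k) None)"

end

theory Submission
  imports Defs
begin

(* Since the generators a_j, b_j of H^(R) have finite support, a vector phi of l2(A)
   is orthogonal to their closed span iff it is orthogonal to each of them, i.e. iff
   the local "coordinate equations" <a_j,phi> = <b_j,phi> = 0 hold at every vertex j.
   Each eta_k solves these equations: the identity Q_v sqrt(q~_v) = Q_(v+1) sqrt(p_(v+1))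
   makes eta_k invariant under the shift S (so the b-equations follow from the
   a-equations), and the a-equations are checked vertex by vertex.  As eta_k lives on
   vertices v >= j_k >= k, every coefficientwise sum sum_k c_k eta_k is locally a
   finite sum and therefore solves the equations as well.  Conversely, for phi in
   H^(S) choose c_k so that phi and sum_k c_k eta_k agree on the R-arc at j_k; the
   difference solves the equations and vanishes on these R-arcs, and a forward
   induction along the half-line shows that it vanishes.  Finally eta_k is orthogonal
   to all a_j, so Pi_A eta_k = 0, C eta_k = -eta_k and U eta_k = S(-eta_k) = -eta_k. *)

lemma arcs_iff: "(a, b) \<in> arcs r \<longleftrightarrow> a = Suc b \<or> Suc a = b \<or> (a = b \<and> r b > 0)"
  unfolding arcs_def by auto

lemma ell2A_off_arcs: "\<phi> \<in> ell2A r \<Longrightarrow> e \<notin> arcs r \<Longrightarrow> \<phi> e = 0"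
  unfolding ell2A_def by (cases e) auto

definition supp :: "(nat \<times> nat \<Rightarrow> complex) \<Rightarrow> (nat \<times> nat) set" where
  "supp x = {e. x e \<noteq> 0}"

lemma infsum_finite_support:
  assumes "finite F" "\<And>e. e \<notin> F \<Longrightarrow> f e = 0"
  shows "infsum f UNIV = sum f F"
proof -
  have "infsum f UNIV = infsum f F"
    by (rule infsum_cong_neutral) (use assms in auto)
  then show ?thesis using assms by simp
qed

lemma summable_finite_support:
  assumes "finite F" "\<And>e. e \<notin> F \<Longrightarrow> f e = 0"
  shows "f summable_on UNIV"
proof -
  have "f summable_on F" using assms by simp
  then show ?thesis
    using summable_on_cong_neutral[of F UNIV f f] assms by auto
qed

lemma supp_summable:
  assumes "finite (supp f)"
  shows "(\<lambda>e. cnj (f e) * g e) summable_on UNIV" "(\<lambda>e. (cmod (f e))\<^sup>2) summable_on UNIV"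
  by (rule summable_finite_support[OF assms]; simp add: supp_def)+

text \<open>Square-summable functions form a vector space on which the pairing is absolutely
  summable (the inequality \<open>2ab \<le> a\<^sup>2 + b\<^sup>2\<close>).\<close>

lemma l2_prod_summable:
  fixes f g :: "'a \<Rightarrow> complex"
  assumes "(\<lambda>e. (cmod (f e))\<^sup>2) summable_on UNIV" "(\<lambda>e. (cmod (g e))\<^sup>2) summable_on UNIV"
  shows "(\<lambda>e. cnj (f e) * g e) summable_on UNIV"
    and "(\<lambda>e. cmod (f e) * cmod (g e)) summable_on UNIV"
proof -
  have sq: "(\<lambda>e. (cmod (f e))\<^sup>2 + (cmod (g e))\<^sup>2) summable_on UNIV"
    using assms by (rule summable_on_add)
  have "cmod (f e) * cmod (g e) \<le> (cmod (f e))\<^sup>2 + (cmod (g e))\<^sup>2" for e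
    using sum_squares_bound[of "cmod (f e)" "cmod (g e)"]
      mult_nonneg_nonneg[OF norm_ge_zero[of "f e"] norm_ge_zero[of "g e"]] by linarith
  then have abs: "(\<lambda>e. norm (cnj (f e) * g e)) summable_on UNIV"
    by (intro summable_on_comparison_test[OF sq]) (simp_all add: norm_mult)
  then show "(\<lambda>e. cnj (f e) * g e) summable_on UNIV"
    by (rule abs_summable_summable)
  show "(\<lambda>e. cmod (f e) * cmod (g e)) summable_on UNIV"
    using abs by (simp add: norm_mult)
qed

lemma l2_diff:
  fixes f g :: "'a \<Rightarrow> complex"
  assumes "(\<lambda>e. (cmod (f e))\<^sup>2) summable_on UNIV" "(\<lambda>e. (cmod (g e))\<^sup>2) summable_on UNIV"
  shows "(\<lambda>e. (cmod (f e - g e))\<^sup>2) summable_on UNIV"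
proof -
  have sq: "(\<lambda>e. 2 * (cmod (f e))\<^sup>2 + 2 * (cmod (g e))\<^sup>2) summable_on UNIV"
    using assms by (intro summable_on_add summable_on_cmult_right)
  have "(cmod (f e - g e))\<^sup>2 \<le> 2 * (cmod (f e))\<^sup>2 + 2 * (cmod (g e))\<^sup>2" for e
  proof -
    have "(cmod (f e - g e))\<^sup>2 \<le> (cmod (f e) + cmod (g e))\<^sup>2"
      by (simp add: power_mono norm_triangle_ineq4)
    also have "\<dots> \<le> 2 * (cmod (f e))\<^sup>2 + 2 * (cmod (g e))\<^sup>2"
      using sum_squares_bound[of "cmod (f e)" "cmod (g e)"] by (simp add: power2_sum)
    finally show ?thesis .
  qed
  then show ?thesis
    by (intro summable_on_comparison_test[OF sq]) auto
qed

lemma weighted_product_bound: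
  fixes a b \<epsilon> :: real
  assumes "\<epsilon> > 0"
  shows "a * b \<le> (a\<^sup>2 / \<epsilon> + \<epsilon> * b\<^sup>2) / 2"
proof -
  have "0 \<le> (a - \<epsilon>*b)\<^sup>2/\<epsilon>" using assms by simp
  also have "(a - \<epsilon>*b)\<^sup>2/\<epsilon> = a\<^sup>2/\<epsilon> + \<epsilon>*b\<^sup>2 - 2*(a*b)"
    using assms by (simp add: field_simps power2_eq_square)
  finally show ?thesis by simp
qed

lemma inner2_weighted_bound:
  fixes d \<phi> :: "nat \<times> nat \<Rightarrow> complex"
  assumes ds: "(\<lambda>e. (cmod (d e))\<^sup>2) summable_on UNIV"
    and phis: "(\<lambda>e. (cmod (\<phi> e))\<^sup>2) summable_on UNIV" and eps: "\<epsilon> > 0"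
  shows "cmod (inner2 d \<phi>) \<le>
           ((\<Sum>\<^sub>\<infinity>e. (cmod (d e))\<^sup>2) / \<epsilon> + \<epsilon> * (\<Sum>\<^sub>\<infinity>e. (cmod (\<phi> e))\<^sup>2)) / 2"
proof -
  define D P where "D = (\<Sum>\<^sub>\<infinity>e. (cmod (d e))\<^sup>2)" and "P = (\<Sum>\<^sub>\<infinity>e. (cmod (\<phi> e))\<^sup>2)"
  have prod: "(\<lambda>e. cmod (d e) * cmod (\<phi> e)) summable_on UNIV"
    by (rule l2_prod_summable(2)[OF ds phis])
  have hs: "((\<lambda>e. ((cmod (d e))\<^sup>2 / \<epsilon> + \<epsilon> * (cmod (\<phi> e))\<^sup>2) / 2) has_sum ((D / \<epsilon> + \<epsilon> * P) / 2)) UNIV"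
  proof -
    have "((\<lambda>e. ((cmod (d e))\<^sup>2 * inverse \<epsilon> + \<epsilon> * (cmod (\<phi> e))\<^sup>2) * inverse 2)
            has_sum ((D * inverse \<epsilon> + \<epsilon> * P) * inverse 2)) UNIV"
      using ds phis unfolding D_def P_def
      by (intro has_sum_cmult_left has_sum_add has_sum_cmult_right) simp_all
    then show ?thesis by (simp only: divide_inverse)
  qed
  have "cmod (inner2 d \<phi>) \<le> (\<Sum>\<^sub>\<infinity>e. norm (cnj (d e) * \<phi> e))"
    unfolding inner2_def by (rule norm_infsum_bound) (use prod in \<open>simp add: norm_mult\<close>)
  also have "\<dots> = (\<Sum>\<^sub>\<infinity>e. cmod (d e) * cmod (\<phi> e))" by (simp add: norm_mult)
  also have "\<dots> \<le> (\<Sum>\<^sub>\<infinity>e. ((cmod (d e))\<^sup>2 / \<epsilon> + \<epsilon> * (cmod (\<phi> e))\<^sup>2) / 2)"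
    by (rule infsum_mono[OF prod has_sum_imp_summable[OF hs] weighted_product_bound[OF eps]])
  also have "\<dots> = (D / \<epsilon> + \<epsilon> * P) / 2"
    using hs by (rule infsumI)
  finally show ?thesis unfolding D_def P_def .
qed

lemma inner_finspan:
  assumes X: "\<And>x. x \<in> X \<Longrightarrow> finite (supp x) \<and> inner2 x \<phi> = 0"
    and f: "f \<in> finspan X"
  shows "inner2 f \<phi> = 0" and "finite (supp f)"
proof -
  obtain F c where fd: "f = (\<lambda>e. \<Sum>x\<in>F. c x * x e)" and F: "finite F" "F \<subseteq> X"
    using f unfolding finspan_def by blast
  define G where "G = (\<Union>x\<in>F. supp x)"
  have G: "finite G" using F X unfolding G_def by blast
  have fz: "f e = 0" if "e \<notin> G" for e
    using that unfolding fd G_def supp_def by (auto intro!: sum.neutral)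
  show "finite (supp f)"
    using G fz unfolding supp_def by (metis (mono_tags, lifting) mem_Collect_eq rev_finite_subset subsetI)
  have xi: "inner2 x \<phi> = (\<Sum>e\<in>G. cnj (x e) * \<phi> e)" if "x \<in> F" for x
    unfolding inner2_def
    by (rule infsum_finite_support[OF G]) (use that in \<open>auto simp: G_def supp_def\<close>)
  have "inner2 f \<phi> = (\<Sum>e\<in>G. cnj (f e) * \<phi> e)"
    unfolding inner2_def by (rule infsum_finite_support[OF G]) (use fz in auto)
  also have "\<dots> = (\<Sum>x\<in>F. cnj (c x) * (\<Sum>e\<in>G. cnj (x e) * \<phi> e))"
    unfolding fd by (simp add: sum_distrib_right sum_distrib_left mult.assoc sum.swap[of _ G])
  also have "\<dots> = (\<Sum>x\<in>F. cnj (c x) * inner2 x \<phi>)"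
    using xi by simp
  also have "\<dots> = 0" using X F by (simp add: subset_iff)
  finally show "inner2 f \<phi> = 0" .
qed

text \<open>If \<open>\<psi>\<close> lies in the closed span of finitely supported generators orthogonal to
  \<open>\<phi>\<close>, choose a combination \<open>f\<close> that is \<open>\<epsilon>\<close>-close to \<open>\<psi>\<close>; then \<open>\<langle>\<psi>,\<phi>\<rangle> = \<langle>\<psi> - f,\<phi>\<rangle>\<close>
  is at most \<open>\<epsilon>(1 + \<parallel>\<phi>\<parallel>\<^sup>2)/2\<close> in modulus.\<close>

lemma cspan_orth_bound:
  assumes phi: "\<phi> \<in> ell2A r"
    and X: "\<And>x. x \<in> X \<Longrightarrow> finite (supp x) \<and> inner2 x \<phi> = 0"
    and psi: "\<psi> \<in> cspan r X" and eps: "\<epsilon> > 0"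
  shows "cmod (inner2 \<psi> \<phi>) \<le> \<epsilon> * (1 + (\<Sum>\<^sub>\<infinity>e. (cmod (\<phi> e))\<^sup>2)) / 2"
proof -
  define P where "P = (\<Sum>\<^sub>\<infinity>e. (cmod (\<phi> e))\<^sup>2)"
  have phis: "(\<lambda>e. (cmod (\<phi> e))\<^sup>2) summable_on UNIV" using phi unfolding ell2A_def by auto
  have psis: "(\<lambda>e. (cmod (\<psi> e))\<^sup>2) summable_on UNIV" using psi unfolding cspan_def ell2A_def by auto
  obtain f where f: "f \<in> finspan X" and close: "norm2 (\<lambda>e. \<psi> e - f e) < \<epsilon>"
    using psi eps unfolding cspan_def by blast
  define d where "d = (\<lambda>e. \<psi> e - f e)"
  define D where "D = (\<Sum>\<^sub>\<infinity>e. (cmod (d e))\<^sup>2)"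
  have fs: "finite (supp f)" and fi: "inner2 f \<phi> = 0" using inner_finspan[OF X f] by auto
  have ds: "(\<lambda>e. (cmod (d e))\<^sup>2) summable_on UNIV"
    unfolding d_def by (rule l2_diff[OF psis supp_summable(2)[OF fs]])
  have "D \<ge> 0" unfolding D_def by (rule infsum_nonneg) simp
  moreover have "sqrt D < \<epsilon>" using close unfolding norm2_def D_def d_def by simp
  ultimately have "D < \<epsilon>\<^sup>2"
    using power_strict_mono[of "sqrt D" \<epsilon> 2] by simp
  then have D_eps: "D / \<epsilon> \<le> \<epsilon>" using eps by (simp add: field_simps power2_eq_square)
  have "inner2 \<psi> \<phi> = (\<Sum>\<^sub>\<infinity>e. cnj (d e) * \<phi> e + cnj (f e) * \<phi> e)"
    unfolding inner2_def d_def by (simp add: algebra_simps)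
  also have "\<dots> = inner2 d \<phi> + inner2 f \<phi>"
    unfolding inner2_def
    by (rule infsum_add[OF l2_prod_summable(1)[OF ds phis] supp_summable(1)[OF fs]])
  finally have "inner2 \<psi> \<phi> = inner2 d \<phi>" using fi by simp
  also have "cmod \<dots> \<le> (D / \<epsilon> + \<epsilon> * P) / 2"
    unfolding D_def P_def by (rule inner2_weighted_bound[OF ds phis eps])
  also have "\<dots> \<le> (\<epsilon> + \<epsilon> * P) / 2"
    by (intro divide_right_mono add_right_mono D_eps) simp
  also have "\<dots> = \<epsilon> * (1 + P) / 2"
    by (simp add: algebra_simps)
  finally show ?thesis unfolding P_def .
qed

text \<open>Hence orthogonality to finitely supported generators passes to their closed span
  (choose \<open>\<epsilon> = |\<langle>\<psi>,\<phi>\<rangle>| / (1 + \<parallel>\<phi>\<parallel>\<^sup>2)\<close>).\<close>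

lemma cspan_orth:
  assumes phi: "\<phi> \<in> ell2A r"
    and X: "\<And>x. x \<in> X \<Longrightarrow> finite (supp x) \<and> inner2 x \<phi> = 0"
    and psi: "\<psi> \<in> cspan r X"
  shows "inner2 \<psi> \<phi> = 0"
proof (rule ccontr)
  define P where "P = (\<Sum>\<^sub>\<infinity>e. (cmod (\<phi> e))\<^sup>2)"
  have P0: "P \<ge> 0" unfolding P_def by (rule infsum_nonneg) simp
  assume "inner2 \<psi> \<phi> \<noteq> 0"
  then have pos: "cmod (inner2 \<psi> \<phi>) > 0" by simp
  have "cmod (inner2 \<psi> \<phi>) \<le> cmod (inner2 \<psi> \<phi>) / 2"
    using cspan_orth_bound[OF phi X psi, of "cmod (inner2 \<psi> \<phi>) / (1 + P)"] pos P0
    unfolding P_def by simp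
  then show False using pos by simp
qed

lemma zero_in_cspan: "(\<lambda>e. 0) \<in> cspan r X"
proof -
  have "(\<lambda>e. 0) \<in> finspan X" unfolding finspan_def
    by (rule CollectI, rule exI[of _ "{}"], rule exI[of _ "\<lambda>_. 0"]) auto
  moreover have "(\<lambda>e. 0::complex) \<in> ell2A r" unfolding ell2A_def by simp
  ultimately show ?thesis unfolding cspan_def norm2_def
    by (intro CollectI conjI allI impI bexI[of _ "\<lambda>e. 0"]) auto
qed

lemma generator_in_cspan:
  assumes "x \<in> X" "finite (supp x)" "\<And>e. e \<notin> arcs r \<Longrightarrow> x e = 0"
  shows "x \<in> cspan r X"
proof -
  have "x \<in> finspan X" unfolding finspan_def
    by (rule CollectI, rule exI[of _ "{x}"], rule exI[of _ "\<lambda>_. 1"]) (use assms in auto)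
  moreover have "x \<in> ell2A r" unfolding ell2A_def
    using assms supp_summable(2)[OF assms(2)] by auto
  ultimately show ?thesis unfolding cspan_def norm2_def
    by (intro CollectI conjI allI impI bexI[of _ x]) auto
qed

lemma inner_self_zero:
  assumes "(\<lambda>e. (cmod (\<psi> e))\<^sup>2) summable_on UNIV" "inner2 \<psi> \<psi> = 0"
  shows "\<psi> = (\<lambda>e. 0)"
proof -
  define D where "D = (\<Sum>\<^sub>\<infinity>e. (cmod (\<psi> e))\<^sup>2)"
  have h: "((\<lambda>e. (cmod (\<psi> e))\<^sup>2) has_sum D) UNIV" using assms(1) unfolding D_def by simp
  have "(\<lambda>e. complex_of_real ((cmod (\<psi> e))\<^sup>2)) = (\<lambda>e. cnj (\<psi> e) * \<psi> e)"
    by (rule ext, subst complex_norm_square, rule mult.commute)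
  then have "inner2 \<psi> \<psi> = complex_of_real D" unfolding inner2_def
    using has_sum_of_real[OF h] by (metis infsumI)
  then have "D = 0" using assms(2) by simp
  have "(cmod (\<psi> e))\<^sup>2 = 0" for e
    by (rule nonneg_infsum_le_0D[of _ UNIV]) (use \<open>D = 0\<close> assms(1) in \<open>auto simp: D_def\<close>)
  then show ?thesis by auto
qed

text \<open>The shift is self-adjoint (it permutes the arcs).\<close>

lemma inner2_shift: "inner2 (shift x) y = inner2 x (shift y)"
proof -
  have "bij_betw prod.swap (UNIV :: (nat \<times> nat) set) UNIV"
    by (rule bij_betwI[of _ _ _ prod.swap]) auto
  then show ?thesis
    unfolding inner2_def shift_def
    using infsum_reindex_bij_betw[of prod.swap UNIV UNIV "\<lambda>e. cnj (x (prod.swap e)) * y e"]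
    by (simp add: case_prod_beta prod.swap_def)
qed

lemma proj_zero:
  assumes phi: "\<phi> \<in> ell2A r" and orth: "\<And>g. g \<in> cspan r X \<Longrightarrow> inner2 g \<phi> = 0"
  shows "proj r X \<phi> = (\<lambda>e. 0)"
  unfolding proj_def
proof (rule the_equality)
  show "(\<lambda>e. 0) \<in> cspan r X \<and> (\<forall>g\<in>cspan r X. inner2 g (\<lambda>e. \<phi> e - 0) = 0)"
    using zero_in_cspan orth by simp
next
  fix \<psi> assume a: "\<psi> \<in> cspan r X \<and> (\<forall>g\<in>cspan r X. inner2 g (\<lambda>e. \<phi> e - \<psi> e) = 0)"
  have psis: "(\<lambda>e. (cmod (\<psi> e))\<^sup>2) summable_on UNIV" using a unfolding cspan_def ell2A_def by auto
  have phis: "(\<lambda>e. (cmod (\<phi> e))\<^sup>2) summable_on UNIV" using phi unfolding ell2A_def by auto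
  have "0 = inner2 \<psi> (\<lambda>e. \<phi> e - \<psi> e)" using a by simp
  also have "\<dots> = (\<Sum>\<^sub>\<infinity>e. cnj (\<psi> e) * \<phi> e + (- (cnj (\<psi> e) * \<psi> e)))"
    unfolding inner2_def by (simp add: algebra_simps)
  also have "\<dots> = inner2 \<psi> \<phi> + (- inner2 \<psi> \<psi>)"
    unfolding inner2_def
    by (subst infsum_add) (auto intro: l2_prod_summable[OF psis phis]
          summable_on_uminus[THEN iffD2, OF l2_prod_summable(1)[OF psis psis]] simp: infsum_uminus)
  also have "inner2 \<psi> \<phi> = 0" using orth a by simp
  finally have "inner2 \<psi> \<psi> = 0" by simp
  then show "\<psi> = (\<lambda>e. 0)" by (rule inner_self_zero[OF psis])
qed

text \<open>The rank of a vertex \<open>v\<close>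
  counts the elements of \<open>\<S>\<close> below \<open>v\<close>; on \<open>\<S>\<close> it is the inverse of \<open>sj\<close>.\<close>

definition srank :: "(nat \<Rightarrow> real) \<Rightarrow> nat \<Rightarrow> nat" where
  "srank r v = card {i \<in> Sset r. i < v}"

lemma srank_mono:
  assumes "i \<in> Sset r" "i < v"
  shows "srank r i < srank r v"
proof -
  have "{i' \<in> Sset r. i' < i} \<subset> {i' \<in> Sset r. i' < v}" using assms by auto
  then show ?thesis unfolding srank_def by (rule psubset_card_mono[rotated]) simp
qed

lemma srank_inj:
  assumes "i \<in> Sset r" "j \<in> Sset r" "srank r i = srank r j"
  shows "i = j"
  using srank_mono[of i r j] srank_mono[of j r i] assms by (metis less_irrefl nat_neq_iff)

lemma Kset_down: "k \<in> Kset r \<Longrightarrow> k' \<le> k \<Longrightarrow> k' \<in> Kset r"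
  unfolding Kset_def by auto

lemma srank_in_Kset:
  assumes "v \<in> Sset r"
  shows "srank r v \<in> Kset r"
proof (cases "finite (Sset r)")
  case True
  have "{i \<in> Sset r. i < v} \<subset> Sset r" using assms by auto
  then have "srank r v < card (Sset r)" unfolding srank_def using True by (rule psubset_card_mono[rotated])
  then show ?thesis unfolding Kset_def by simp
next
  case False then show ?thesis unfolding Kset_def by simp
qed

text \<open>Every admissible index is attained as a rank: the vertex of rank \<open>k+1\<close> is the
  least element of \<open>\<S>\<close> above the vertex of rank \<open>k\<close>.\<close>

lemma srank_surj: "k \<in> Kset r \<Longrightarrow> \<exists>v \<in> Sset r. srank r v = k"
proof (induction k)
  case 0
  then have ne: "Sset r \<noteq> {}" unfolding Kset_def by auto
  define v where "v = (LEAST i. i \<in> Sset r)"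
  have v: "v \<in> Sset r" using ne unfolding v_def by (metis LeastI ex_in_conv)
  have "{i \<in> Sset r. i < v} = {}" unfolding v_def using not_less_Least by blast
  then show ?case using v unfolding srank_def by auto
next
  case (Suc k)
  then have "k \<in> Kset r" using Kset_down by (metis le_add2 plus_1_eq_Suc)
  with Suc.IH obtain v where v: "v \<in> Sset r" "srank r v = k" by blast
  have ex: "\<exists>i \<in> Sset r. v < i"
  proof (rule ccontr)
    assume "\<not> ?thesis"
    then have sub: "Sset r = insert v {i \<in> Sset r. i < v}" using v by (auto simp: not_less le_less)
    have f0: "finite {i \<in> Sset r. i < v}" by simp
    have fin: "finite (Sset r)" using f0 finite_insert[of v] sub by metis
    have "card (Sset r) = card (insert v {i \<in> Sset r. i < v})" using arg_cong[of _ _ card, OF sub] .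
    also have "\<dots> = Suc (card {i \<in> Sset r. i < v})" by (rule card_insert_disjoint[OF f0]) simp
    finally have "card (Sset r) = Suc k" using v unfolding srank_def by simp
    then show False using Suc.prems fin unfolding Kset_def by simp
  qed
  define w where "w = (LEAST i. i \<in> Sset r \<and> v < i)"
  obtain i0 where i0: "i0 \<in> Sset r \<and> v < i0" using ex by blast
  have wP: "w \<in> Sset r \<and> v < w" unfolding w_def by (rule LeastI[of _ i0]) (rule i0)
  then have w: "w \<in> Sset r" "v < w" by auto
  have wmin: "\<And>i. i \<in> Sset r \<Longrightarrow> v < i \<Longrightarrow> w \<le> i" unfolding w_def by (simp add: Least_le)
  have "{i \<in> Sset r. i < w} = insert v {i \<in> Sset r. i < v}"
    using w wmin v by (auto simp: not_less) (meson leD less_trans nat_neq_iff)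
  then have "srank r w = Suc (srank r v)" unfolding srank_def by simp
  then show ?case using w v by auto
qed

lemma sj_prop:
  assumes "k \<in> Kset r"
  shows "sj r k \<in> Sset r" "srank r (sj r k) = k"
proof -
  obtain v where v: "v \<in> Sset r" "srank r v = k" using srank_surj[OF assms] by blast
  have "sj r k \<in> Sset r \<and> card {i \<in> Sset r. i < sj r k} = k"
    unfolding sj_def by (rule LeastI[of _ v]) (use v in \<open>simp add: srank_def\<close>)
  then show "sj r k \<in> Sset r" "srank r (sj r k) = k" unfolding srank_def by auto
qed

lemma sj_srank: "v \<in> Sset r \<Longrightarrow> sj r (srank r v) = v"
  using sj_prop[OF srank_in_Kset] srank_inj by metis

lemma sj_less:
  assumes "k \<in> Kset r" "k' < k"
  shows "sj r k' < sj r k"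
proof -
  have k': "k' \<in> Kset r" using assms Kset_down by auto
  show ?thesis
  proof (rule ccontr)
    assume "\<not> ?thesis"
    then have "sj r k \<le> sj r k'" by simp
    then consider "sj r k = sj r k'" | "sj r k < sj r k'" by linarith
    then show False
    proof cases
      case 1 then have "k = k'" using sj_prop(2)[OF assms(1)] sj_prop(2)[OF k'] by metis
        then show False using assms by simp
    next
      case 2 then show False using srank_mono[OF sj_prop(1)[OF assms(1)] 2] sj_prop[OF assms(1)] sj_prop[OF k'] assms
        by simp
    qed
  qed
qed

text \<open>Consequently \<open>k \<le> j\<^sub>k\<close>: the vector \<open>\<eta>\<^sub>k\<close> only lives on vertices \<open>\<ge> k\<close>.\<close>

lemma sj_ge: "k \<in> Kset r \<Longrightarrow> k \<le> sj r k"
proof (induction k)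
  case (Suc k)
  have "k \<in> Kset r" using Suc.prems Kset_down by (metis le_add2 plus_1_eq_Suc)
  then show ?case using Suc sj_less[OF Suc.prems, of k] by simp
qed simp

lemma sj_next_le:
  assumes "k \<in> Kset r" "v \<in> Sset r" "sj r k < v"
  shows "Suc k \<in> Kset r" "sj r (Suc k) \<le> v"
proof -
  have "k < srank r v" using srank_mono[OF sj_prop(1)[OF assms(1)] assms(3)] sj_prop(2)[OF assms(1)] by simp
  then have le: "Suc k \<le> srank r v" by simp
  show "Suc k \<in> Kset r" using Kset_down[OF srank_in_Kset[OF assms(2)] le] .
  show "sj r (Suc k) \<le> v"
  proof (cases "Suc k = srank r v")
    case True then show ?thesis using sj_srank[OF assms(2)] by simp
  next
    case False
    then have "Suc k < srank r v" using le by simp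
    then show ?thesis using sj_less[OF srank_in_Kset[OF assms(2)]] sj_srank[OF assms(2)] by (metis less_imp_le)
  qed
qed

text \<open>The coordinate functionals \<open>\<langle>a\<^sub>j,\<psi>\<rangle>\<close> and \<open>\<langle>b\<^sub>j,\<psi>\<rangle>\<close>, written out explicitly
  (the coefficients of \<open>a\<^sub>j\<close>, \<open>b\<^sub>j\<close> are real).  \<open>H\<^sup>(\<^sup>S\<^sup>)\<close> is the common kernel of all of them.\<close>

definition acoord :: "(nat \<Rightarrow> real) \<Rightarrow> (nat \<Rightarrow> real) \<Rightarrow> (nat \<Rightarrow> real) \<Rightarrow> (nat \<times> nat \<Rightarrow> complex) \<Rightarrow> nat \<Rightarrow> complex" where
  "acoord p q r \<psi> j = complex_of_real (sqrt (q j)) * \<psi> (j - 1, j) + complex_of_real (sqrt (r j)) * \<psi> (j, j)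
      + complex_of_real (sqrt (p j)) * \<psi> (Suc j, j)"

definition bcoord :: "(nat \<Rightarrow> real) \<Rightarrow> (nat \<Rightarrow> real) \<Rightarrow> (nat \<Rightarrow> real) \<Rightarrow> (nat \<times> nat \<Rightarrow> complex) \<Rightarrow> nat \<Rightarrow> complex" where
  "bcoord p q r \<psi> j = complex_of_real (sqrt (p j)) * \<psi> (j, Suc j) + complex_of_real (sqrt (r j)) * \<psi> (j, j)
      + complex_of_real (sqrt (q j)) * \<psi> (j, j - 1)"

lemma bcoord_shift: "bcoord p q r \<psi> j = acoord p q r (shift \<psi>) j"
  unfolding acoord_def bcoord_def shift_def by (simp add: algebra_simps)

lemma acoord_sum: "acoord p q r (\<lambda>e. \<Sum>k\<in>B. c k * f k e) j = (\<Sum>k\<in>B. c k * acoord p q r (f k) j)"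
  by (simp add: acoord_def sum.distrib sum_distrib_left algebra_simps)

lemma bcoord_sum: "bcoord p q r (\<lambda>e. \<Sum>k\<in>B. c k * f k e) j = (\<Sum>k\<in>B. c k * bcoord p q r (f k) j)"
  by (simp add: bcoord_def sum.distrib sum_distrib_left algebra_simps)

lemma acoord_diff: "acoord p q r (\<lambda>e. f e - g e) j = acoord p q r f j - acoord p q r g j"
  by (simp add: acoord_def algebra_simps)

lemma bcoord_diff: "bcoord p q r (\<lambda>e. f e - g e) j = bcoord p q r f j - bcoord p q r g j"
  by (simp add: bcoord_def algebra_simps)

text \<open>The profile has three regimes: the start vertex \<open>j\<close> (O- and
  R-arc), the interior vertices strictly between \<open>j\<close> and the optional end vertex
  \<open>t\<close> (L- and R-arc), and the end vertex \<open>t\<close> itself (L- and O-arc).\<close>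

definition below_ub :: "nat option \<Rightarrow> nat \<Rightarrow> bool" where
  "below_ub ub v = (case ub of None \<Rightarrow> True | Some t \<Rightarrow> v < t)"

definition profile :: "(nat \<Rightarrow> real) \<Rightarrow> (nat \<Rightarrow> real) \<Rightarrow> (nat \<Rightarrow> real) \<Rightarrow> nat \<Rightarrow> nat option \<Rightarrow> nat \<Rightarrow> nat \<Rightarrow> real" where
  "profile p q r j ub u v = (if v = j then
         (if u = j then - sqrt (p j * qt q j / r j)
          else if u = Suc j then sqrt (qt q j) else 0)
       else if j < v \<and> below_ub ub v then
         (if Suc u = v then - sqrt (p v) else if u = Suc v then sqrt (q v) else 0)
       else if ub = Some v then
         (if Suc u = v then - sqrt (p v) else if u = v then sqrt (p v * q v / r v) else 0)
       else 0)"

lemma eta_gen_profile: "eta_gen p q r j ub (u, v) = complex_of_real ((-1) ^ v * Qc p q v * profile p q r j ub u v)"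
  unfolding eta_gen_def profile_def below_ub_def by simp

lemma profile_arc_shape: "profile p q r j ub u v \<noteq> 0 \<Longrightarrow> u = v \<or> u = Suc v \<or> Suc u = v"
  unfolding profile_def by (auto split: if_splits)

lemma profile_R_arc: "profile p q r j ub (Suc v) v = (if v = j then sqrt (qt q j) else if j < v \<and> below_ub ub v then sqrt (q v) else 0)"
  unfolding profile_def by auto

lemma sqrt_div_cancel: "a > 0 \<Longrightarrow> x \<ge> 0 \<Longrightarrow> sqrt a * sqrt (x / a) = sqrt x"
  by (simp add: real_sqrt_mult[symmetric])

text \<open>Standing assumptions on the walk.\<close>

locale walk =
  fixes p q r :: "nat \<Rightarrow> real"
  assumes nonneg: "\<And>j. p j \<ge> 0 \<and> q j \<ge> 0 \<and> r j \<ge> 0"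
    and q0: "q 0 = 0"
    and ppos: "\<And>j. p j > 0"
    and qpos: "\<And>j. j \<ge> 1 \<Longrightarrow> q j > 0"
begin

lemma qt_pos: "qt q j > 0"
  unfolding qt_def using qpos by auto

lemma prodq_pos: "(\<Prod>i=1..v. q i) > 0"
  by (rule prod_pos) (use qpos in auto)

lemma prodp_pos: "(\<Prod>i=1..v. p i) > 0"
  by (rule prod_pos) (use ppos in auto)

lemma Qc_pos: "Qc p q v > 0"
  unfolding Qc_def using prodq_pos prodp_pos qpos[of v]
  by (auto intro!: divide_pos_pos mult_pos_pos)

text \<open>Both sides of the key identity equal \<open>\<surd>(q\<^sub>1\<cdots>q\<^sub>v / p\<^sub>1\<cdots>p\<^sub>v)\<close>.\<close>

lemma Qc_qt: "Qc p q v * sqrt (qt q v) = sqrt ((\<Prod>i=1..v. q i) / (\<Prod>i=1..v. p i))"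
proof (cases "v = 0")
  case True then show ?thesis by (simp add: Qc_def qt_def)
next
  case False
  then have qv: "q v > 0" using qpos by simp
  have "Qc p q v * sqrt (qt q v) = sqrt ((\<Prod>i=1..v. q i) / ((\<Prod>i=1..v. p i) * q v)) * sqrt (q v)"
    using False by (simp add: Qc_def qt_def)
  also have "\<dots> = sqrt ((\<Prod>i=1..v. q i) / ((\<Prod>i=1..v. p i) * q v) * q v)"
    by (rule real_sqrt_mult[symmetric])
  also have "\<dots> = sqrt ((\<Prod>i=1..v. q i) / (\<Prod>i=1..v. p i))"
    using qv by simp
  finally show ?thesis .
qed

lemma Qc_p: "Qc p q (Suc v) * sqrt (p (Suc v)) = sqrt ((\<Prod>i=1..v. q i) / (\<Prod>i=1..v. p i))"
proof -
  have pv: "p (Suc v) > 0" "q (Suc v) > 0" using ppos qpos by auto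
  have "Qc p q (Suc v) * sqrt (p (Suc v)) =
      sqrt ((\<Prod>i=1..v. q i) * q (Suc v) / ((\<Prod>i=1..v. p i) * p (Suc v) * q (Suc v)) * p (Suc v))"
    by (simp add: Qc_def real_sqrt_mult prod.cl_ivl_Suc)
  also have "\<dots> = sqrt ((\<Prod>i=1..v. q i) / (\<Prod>i=1..v. p i))"
    using pv by (simp add: field_simps)
  finally show ?thesis .
qed

lemma Q_identity: "Qc p q v * sqrt (qt q v) = Qc p q (Suc v) * sqrt (p (Suc v))"
  using Qc_qt Qc_p by simp

text \<open>The profile solves the a-equation at every vertex, provided the start and end
  vertices carry an O-arc: at \<open>j\<close> and at \<open>t\<close> the O-entry cancels the R- resp. L-entry,
  at interior vertices the L- and R-entries cancel.\<close>

lemma profile_acoord: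
  assumes rj: "r j > 0" and ub: "\<And>t. ub = Some t \<Longrightarrow> j < t \<and> r t > 0"
  shows "sqrt (q v) * profile p q r j ub (v - 1) v + sqrt (r v) * profile p q r j ub v v
         + sqrt (p v) * profile p q r j ub (Suc v) v = 0"
proof -
  consider (a) "v = j" | (b) "v \<noteq> j" "j < v \<and> below_ub ub v" | (c) "v \<noteq> j" "\<not> (j < v \<and> below_ub ub v)" "ub = Some v"
    | (d) "v \<noteq> j" "\<not> (j < v \<and> below_ub ub v)" "ub \<noteq> Some v" by blast
  then show ?thesis
  proof cases
    case a
    have t1: "sqrt (q v) * profile p q r j ub (v - 1) v = 0"
    proof (cases "v = 0")
      case True then show ?thesis using q0 by simp
    next
      case False then show ?thesis using a by (auto simp: profile_def)
    qed
    have "sqrt (r j) * sqrt (p j * qt q j / r j) = sqrt (p j) * sqrt (qt q j)"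
      using sqrt_div_cancel[OF rj, of "p j * qt q j"] nonneg[of j] qt_pos[of j]
      by (simp add: real_sqrt_mult)
    then show ?thesis using t1 a by (simp add: profile_def below_ub_def)
  next
    case b
    then have v1: "v \<ge> 1" by simp
    have "profile p q r j ub (v - 1) v = - sqrt (p v)" using b v1 by (simp add: profile_def below_ub_def)
    moreover have "profile p q r j ub v v = 0" using b by (simp add: profile_def below_ub_def)
    moreover have "profile p q r j ub (Suc v) v = sqrt (q v)" using b by (simp add: profile_def below_ub_def)
    ultimately show ?thesis by simp
  next
    case c
    then have v1: "v \<ge> 1" "r v > 0" using ub[of v] by auto
    have "profile p q r j ub (v - 1) v = - sqrt (p v)" using c v1 by (simp add: profile_def below_ub_def)
    moreover have "profile p q r j ub v v = sqrt (p v * q v / r v)" using c by (simp add: profile_def below_ub_def)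
    moreover have "profile p q r j ub (Suc v) v = 0" using c by (simp add: profile_def below_ub_def)
    moreover have "sqrt (r v) * sqrt (p v * q v / r v) = sqrt (p v) * sqrt (q v)"
      using sqrt_div_cancel[OF v1(2), of "p v * q v"] nonneg[of v]
      by (simp add: real_sqrt_mult)
    ultimately show ?thesis by simp
  next
    case d
    then show ?thesis by (auto simp: profile_def below_ub_def)
  qed
qed

lemma profile_L_arc:
  assumes ub: "\<And>t. ub = Some t \<Longrightarrow> j < t" and v: "j \<le> v" "below_ub ub v"
  shows "profile p q r j ub v (Suc v) = - sqrt (p (Suc v))"
proof (cases "below_ub ub (Suc v)")
  case True then show ?thesis using v by (simp add: profile_def)
next
  case False
  then have "ub = Some (Suc v)" using v(2) unfolding below_ub_def by (auto split: option.splits)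
  then show ?thesis using v False by (simp add: profile_def below_ub_def)
qed

text \<open>The profile weighted by \<open>(-1)\<^sup>v Q\<^sub>v\<close> takes opposite-equal values on the two
  directions of each edge \<open>{v, v+1}\<close>; this is where the choice of \<open>Q\<close> enters.\<close>

lemma profile_sym:
  assumes ub: "\<And>t. ub = Some t \<Longrightarrow> j < t"
  shows "(-1) ^ v * Qc p q v * profile p q r j ub (Suc v) v
       = (-1) ^ (Suc v) * Qc p q (Suc v) * profile p q r j ub v (Suc v)"
proof (cases "j \<le> v \<and> below_ub ub v")
  case True
  have "profile p q r j ub (Suc v) v = sqrt (qt q v)"
    using True by (cases "v = j") (auto simp: profile_R_arc qt_def)
  then show ?thesis
    using profile_L_arc[OF ub] True Q_identity[of v] by simp
next
  case False
  have "v \<noteq> j" using False ub unfolding below_ub_def by (auto split: option.splits)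
  then have "profile p q r j ub (Suc v) v = 0" using False by (auto simp: profile_R_arc)
  moreover have "profile p q r j ub v (Suc v) = 0"
    using False ub unfolding profile_def below_ub_def by (auto split: option.splits)
  ultimately show ?thesis by simp
qed

lemma profile_support:
  assumes rj: "r j > 0" and ub: "\<And>t. ub = Some t \<Longrightarrow> j < t \<and> r t > 0"
    and nz: "profile p q r j ub u v \<noteq> 0"
  shows "j \<le> v" "u = v \<Longrightarrow> r v > 0"
proof -
  show "j \<le> v" using nz ub unfolding profile_def by (auto split: if_splits)
  show "u = v \<Longrightarrow> r v > 0" using nz ub rj unfolding profile_def by (auto split: if_splits)
qed

lemma eta_gen_sym:
  assumes ub: "\<And>t. ub = Some t \<Longrightarrow> j < t"
  shows "eta_gen p q r j ub (u, v) = eta_gen p q r j ub (v, u)"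
proof -
  consider "u = v" | "u = Suc v" | "v = Suc u" | "u \<noteq> v" "u \<noteq> Suc v" "v \<noteq> Suc u" by blast
  then show ?thesis
  proof cases
    case 2 then show ?thesis unfolding eta_gen_profile using profile_sym[where v=v, OF ub] by (simp del: power_Suc)
  next
    case 3 then show ?thesis unfolding eta_gen_profile using profile_sym[where v=u, OF ub] by (simp del: power_Suc)
  next
    case 4
    then have "profile p q r j ub u v = 0" "profile p q r j ub v u = 0" using profile_arc_shape by blast+
    then show ?thesis unfolding eta_gen_profile by simp
  qed simp
qed

lemma eta_gen_shift:
  assumes ub: "\<And>t. ub = Some t \<Longrightarrow> j < t"
  shows "shift (eta_gen p q r j ub) = eta_gen p q r j ub"
  unfolding shift_def using eta_gen_sym[OF ub] by auto

lemma eta_gen_acoord: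
  assumes rj: "r j > 0" and ub: "\<And>t. ub = Some t \<Longrightarrow> j < t \<and> r t > 0"
  shows "acoord p q r (eta_gen p q r j ub) v = 0"
proof -
  have "acoord p q r (eta_gen p q r j ub) v = complex_of_real ((-1) ^ v * Qc p q v *
     (sqrt (q v) * profile p q r j ub (v - 1) v + sqrt (r v) * profile p q r j ub v v
         + sqrt (p v) * profile p q r j ub (Suc v) v))"
    unfolding acoord_def eta_gen_profile by (simp add: algebra_simps)
  also have "\<dots> = 0"
    by (simp only: profile_acoord[where j=j and ub=ub and v=v, OF rj ub] mult_zero_right of_real_0)
  finally show ?thesis .
qed

lemma eta_gen_bcoord:
  assumes rj: "r j > 0" and ub: "\<And>t. ub = Some t \<Longrightarrow> j < t \<and> r t > 0"
  shows "bcoord p q r (eta_gen p q r j ub) v = 0"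
  using eta_gen_acoord[OF rj ub] eta_gen_shift[of ub j] ub by (simp add: bcoord_shift)

end

context walk begin

lemma avec_vals:
  "avec p q r j (Suc j, j) = complex_of_real (sqrt (p j))"
  "avec p q r j (j, j) = complex_of_real (sqrt (r j))"
  "j \<ge> 1 \<Longrightarrow> avec p q r j (j - 1, j) = complex_of_real (sqrt (q j))"
  "avec p q r j e \<noteq> 0 \<Longrightarrow> e \<in> {(Suc j, j), (j, j), (j - 1, j)}"
proof -
  show "avec p q r j (Suc j, j) = complex_of_real (sqrt (p j))" by (simp add: avec_def)
  show "avec p q r j (j, j) = complex_of_real (sqrt (r j))"
    using nonneg[of j] by (auto simp: avec_def)
  show "j \<ge> 1 \<Longrightarrow> avec p q r j (j - 1, j) = complex_of_real (sqrt (q j))"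
    by (auto simp: avec_def)
  show "avec p q r j e \<noteq> 0 \<Longrightarrow> e \<in> {(Suc j, j), (j, j), (j - 1, j)}"
    by (cases e) (auto simp: avec_def split: if_splits)
qed

lemma inner_avec: "inner2 (avec p q r j) \<phi> = acoord p q r \<phi> j"
proof -
  define G where "G = {(Suc j, j), (j, j), (j - 1, j)}"
  have "inner2 (avec p q r j) \<phi> = (\<Sum>e\<in>G. cnj (avec p q r j e) * \<phi> e)"
    unfolding inner2_def by (rule infsum_finite_support) (use avec_vals(4) in \<open>auto simp: G_def\<close>)
  also have "\<dots> = acoord p q r \<phi> j"
  proof (cases j)
    case 0
    then have "G = {(Suc 0, 0), (0, 0)}" unfolding G_def by auto
    then show ?thesis using 0 avec_vals(1,2)[of 0] q0 by (simp add: acoord_def)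
  next
    case (Suc m)
    then have "G = {(Suc j, j), (j, j), (m, j)}" unfolding G_def by auto
    then show ?thesis using Suc avec_vals(1,2)[of j] avec_vals(3)[of j]
      by (simp add: acoord_def algebra_simps)
  qed
  finally show ?thesis .
qed

lemma inner_bvec: "inner2 (bvec p q r j) \<phi> = bcoord p q r \<phi> j"
  unfolding bvec_def inner2_shift inner_avec bcoord_shift ..

lemma supp_avec: "finite (supp (avec p q r j))"
proof -
  have "supp (avec p q r j) \<subseteq> {(Suc j, j), (j, j), (j - 1, j)}"
    using avec_vals(4)[of j] unfolding supp_def by auto
  then show ?thesis by (rule finite_subset) simp
qed

lemma supp_bvec: "finite (supp (bvec p q r j))"
proof -
  have "supp (bvec p q r j) \<subseteq> {(j, Suc j), (j, j), (j, j - 1)}"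
    using avec_vals(4)[of j] unfolding supp_def bvec_def shift_def by auto
  then show ?thesis by (rule finite_subset) simp
qed

lemma avec_arcs: "e \<notin> arcs r \<Longrightarrow> avec p q r j e = 0"
  by (cases e) (auto simp: arcs_iff avec_def)

lemma bvec_arcs: "e \<notin> arcs r \<Longrightarrow> bvec p q r j e = 0"
  by (cases e) (auto simp: arcs_iff avec_def bvec_def shift_def)

text \<open>\<open>H\<^sup>(\<^sup>S\<^sup>)\<close> consists exactly of the vectors of \<open>\<ell>\<^sup>2(A)\<close> satisfying all coordinate
  equations: the generators belong to \<open>H\<^sup>(\<^sup>R\<^sup>)\<close>, and orthogonality to them passes
  to their closed span.\<close>

lemma HS_iff_coords:
  "\<phi> \<in> HS p q r \<longleftrightarrow> \<phi> \<in> ell2A r \<and> (\<forall>j. acoord p q r \<phi> j = 0 \<and> bcoord p q r \<phi> j = 0)"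
proof
  assume hs: "\<phi> \<in> HS p q r"
  have orth: "\<And>\<psi>. \<psi> \<in> HR p q r \<Longrightarrow> inner2 \<psi> \<phi> = 0" using hs unfolding HS_def orth_def by auto
  have "avec p q r j \<in> HR p q r" for j
    unfolding HR_def by (rule generator_in_cspan) (auto intro: supp_avec avec_arcs)
  then have A: "acoord p q r \<phi> j = 0" for j using orth inner_avec by metis
  have "bvec p q r j \<in> HR p q r" for j
    unfolding HR_def by (rule generator_in_cspan) (auto intro: supp_bvec bvec_arcs)
  then have B: "bcoord p q r \<phi> j = 0" for j using orth inner_bvec by metis
  show "\<phi> \<in> ell2A r \<and> (\<forall>j. acoord p q r \<phi> j = 0 \<and> bcoord p q r \<phi> j = 0)"
    using hs A B unfolding HS_def orth_def by simp
next
  assume coords: "\<phi> \<in> ell2A r \<and> (\<forall>j. acoord p q r \<phi> j = 0 \<and> bcoord p q r \<phi> j = 0)"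
  have "inner2 \<psi> \<phi> = 0" if "\<psi> \<in> HR p q r" for \<psi>
    using that unfolding HR_def
  proof (rule cspan_orth[rotated 2])
    fix x assume "x \<in> range (avec p q r) \<union> range (bvec p q r)"
    then show "finite (supp x) \<and> inner2 x \<phi> = 0"
      using supp_avec supp_bvec inner_avec inner_bvec coords by auto
  qed (use coords in simp)
  then show "\<phi> \<in> HS p q r" using coords unfolding HS_def orth_def by auto
qed

text \<open>Solutions of the coordinate equations are determined by their values on the
  R-arcs of the vertices in \<open>\<S>\<close>.  One vertex step: once the arcs towards \<open>v - 1\<close>
  vanish, the a-equation at \<open>v\<close> forces \<open>\<psi>(v+1,v) = \<psi>(v,v) = 0\<close> (using \<open>p\<^sub>v > 0\<close>, and
  \<open>r\<^sub>v > 0\<close> or the absence of the O-arc), and then the b-equation forces \<open>\<psi>(v,v+1) = 0\<close>.\<close>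

lemma propagation_step:
  assumes A: "acoord p q r \<psi> v = 0" and B: "bcoord p q r \<psi> v = 0"
    and off: "\<And>e. e \<notin> arcs r \<Longrightarrow> \<psi> e = 0"
    and R: "r v > 0 \<Longrightarrow> \<psi> (Suc v, v) = 0"
    and prev: "v > 0 \<Longrightarrow> \<psi> (v - 1, v) = 0 \<and> \<psi> (v, v - 1) = 0"
  shows "\<psi> (Suc v, v) = 0 \<and> \<psi> (v, v) = 0 \<and> \<psi> (v, Suc v) = 0"
proof -
  have L: "complex_of_real (sqrt (q v)) * \<psi> (v - 1, v) = 0"
    and L': "complex_of_real (sqrt (q v)) * \<psi> (v, v - 1) = 0"
    using prev q0 by (cases "v = 0", simp_all)+
  have a: "complex_of_real (sqrt (r v)) * \<psi> (v, v) + complex_of_real (sqrt (p v)) * \<psi> (Suc v, v) = 0"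
    using A unfolding acoord_def L by simp
  have pv: "complex_of_real (sqrt (p v)) \<noteq> 0" using ppos[of v] by simp
  have RO: "\<psi> (Suc v, v) = 0 \<and> \<psi> (v, v) = 0"
  proof (cases "r v > 0")
    case True
    then show ?thesis using a R by simp
  next
    case False
    then have "\<psi> (v, v) = 0" using off by (simp add: arcs_iff)
    then show ?thesis using a pv by simp
  qed
  have "complex_of_real (sqrt (p v)) * \<psi> (v, Suc v) = 0"
    using B RO unfolding bcoord_def L' by simp
  then show ?thesis using RO pv by simp
qed

lemma zero_by_propagation:
  assumes A: "\<And>j. acoord p q r \<psi> j = 0" and B: "\<And>j. bcoord p q r \<psi> j = 0"
    and off: "\<And>e. e \<notin> arcs r \<Longrightarrow> \<psi> e = 0"
    and R: "\<And>v. r v > 0 \<Longrightarrow> \<psi> (Suc v, v) = 0"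
  shows "\<psi> = (\<lambda>e. 0)"
proof
  have vertex: "\<psi> (Suc v, v) = 0 \<and> \<psi> (v, v) = 0 \<and> \<psi> (v, Suc v) = 0" for v
  proof (induction v)
    case 0 show ?case by (rule propagation_step[OF A B off R]) auto
  next
    case (Suc v) then show ?case by (intro propagation_step[OF A B off R]) simp_all
  qed
  fix e :: "nat \<times> nat"
  obtain a b where e: "e = (a, b)" by (cases e)
  consider "a = Suc b" | "Suc a = b" | "a = b" | "e \<notin> arcs r" using e by (auto simp: arcs_iff)
  then show "\<psi> e = 0"
  proof cases
    case 1 then show ?thesis using vertex[of b] e by simp
  next
    case 2 then show ?thesis using vertex[of a] e by auto
  next
    case 3 then show ?thesis using vertex[of b] e by simp
  qed (use off in simp)
qed

end

definition eta_ub :: "(nat \<Rightarrow> real) \<Rightarrow> nat \<Rightarrow> nat option" where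
  "eta_ub r k = (if Suc k \<in> Kset r then Some (sj r (Suc k)) else None)"

lemma eta_eq_gen: "eta p q r k = eta_gen p q r (sj r k) (eta_ub r k)"
  unfolding eta_def eta_ub_def Kset_def by simp

context walk begin

lemma eta_gen_hyps:
  assumes k: "k \<in> Kset r"
  shows "r (sj r k) > 0" "\<And>t. eta_ub r k = Some t \<Longrightarrow> sj r k < t \<and> r t > 0"
proof -
  show "r (sj r k) > 0" using sj_prop(1)[OF k] by (simp add: Sset_def)
  fix t assume "eta_ub r k = Some t"
  then have "Suc k \<in> Kset r" "t = sj r (Suc k)" by (auto simp: eta_ub_def split: if_splits)
  then show "sj r k < t \<and> r t > 0" using sj_less[of "Suc k" r k] sj_prop(1)[of "Suc k" r]
    by (simp add: Sset_def)
qed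

lemma eta_coords:
  assumes k: "k \<in> Kset r"
  shows "acoord p q r (eta p q r k) v = 0" "bcoord p q r (eta p q r k) v = 0"
  unfolding eta_eq_gen using eta_gen_acoord[OF eta_gen_hyps[OF k]] eta_gen_bcoord[OF eta_gen_hyps[OF k]] by auto

lemma eta_shift_invariant:
  assumes k: "k \<in> Kset r"
  shows "shift (eta p q r k) = eta p q r k"
  unfolding eta_eq_gen using eta_gen_shift[of "eta_ub r k" "sj r k"] eta_gen_hyps(2)[OF k] by auto

lemma eta_support:
  assumes k: "k \<in> Kset r" and nz: "eta p q r k (u, v) \<noteq> 0"
  shows "k \<le> v" "(u, v) \<in> arcs r"
proof -
  have F: "profile p q r (sj r k) (eta_ub r k) u v \<noteq> 0" using nz unfolding eta_eq_gen eta_gen_profile by auto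
  have "sj r k \<le> v" using profile_support(1)[OF eta_gen_hyps[OF k] F] .
  then show "k \<le> v" using sj_ge[OF k] by simp
  show "(u, v) \<in> arcs r" using profile_arc_shape[OF F] profile_support(2)[OF eta_gen_hyps[OF k] F] by (auto simp: arcs_iff)
qed

lemma eta_R_arc:
  assumes k: "k \<in> Kset r" and v: "v \<in> Sset r"
  shows "eta p q r k (Suc v, v) =
    (if k = srank r v then complex_of_real ((-1) ^ v * Qc p q v * sqrt (qt q v)) else 0)"
proof (cases "k = srank r v")
  case True
  then have "sj r k = v" using sj_srank[OF v] by simp
  then show ?thesis using True unfolding eta_eq_gen eta_gen_profile profile_R_arc by simp
next
  case False
  then have ne: "sj r k \<noteq> v" using sj_prop(2)[OF k] by auto
  have "\<not> (sj r k < v \<and> below_ub (eta_ub r k) v)"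
  proof
    assume a: "sj r k < v \<and> below_ub (eta_ub r k) v"
    then have "Suc k \<in> Kset r" "sj r (Suc k) \<le> v" using sj_next_le[OF k v] by auto
    then show False using a by (simp add: below_ub_def eta_ub_def)
  qed
  then show ?thesis using False ne unfolding eta_eq_gen eta_gen_profile profile_R_arc by auto
qed

lemma eta_expansion_finite:
  assumes "snd e \<le> M"
  shows "((\<lambda>k. c k * eta p q r k e) has_sum (\<Sum>k\<in>{k \<in> Kset r. k \<le> M}. c k * eta p q r k e)) (Kset r)"
proof (rule has_sum_finite_neutralI)
  fix k assume "k \<in> Kset r - {k \<in> Kset r. k \<le> M}"
  then show "c k * eta p q r k e = 0" using eta_support(1)[of k "fst e" "snd e"] assms by (cases e) force
qed auto

lemma eta_expansion_value:
  assumes hs: "\<And>e. ((\<lambda>k. c k * eta p q r k e) has_sum \<phi> e) (Kset r)" and "snd e \<le> M"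
  shows "\<phi> e = (\<Sum>k\<in>{k \<in> Kset r. k \<le> M}. c k * eta p q r k e)"
  using has_sum_unique[OF hs eta_expansion_finite[OF assms(2)]] .

text \<open>Hence every coefficientwise sum of the \<open>\<eta>\<^sub>k\<close> solves the coordinate equations:
  near vertex \<open>j\<close> it coincides with a finite combination of solutions.\<close>

lemma eta_expansion_coords:
  assumes hs: "\<And>e. ((\<lambda>k. c k * eta p q r k e) has_sum \<phi> e) (Kset r)"
  shows "acoord p q r \<phi> j = 0" "bcoord p q r \<phi> j = 0"
proof -
  define B where "B = {k \<in> Kset r. k \<le> Suc j}"
  define f where "f = (\<lambda>e. \<Sum>k\<in>B. c k * eta p q r k e)"
  have local: "\<phi> e = f e" if "snd e \<le> Suc j" for e
    unfolding f_def B_def using eta_expansion_value[OF hs that] .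
  have "acoord p q r \<phi> j = acoord p q r f j"
    unfolding acoord_def using local[of "(j - 1, j)"] local[of "(j, j)"] local[of "(Suc j, j)"] by simp
  also have "\<dots> = 0" unfolding f_def acoord_sum using eta_coords(1) by (simp add: B_def)
  finally show "acoord p q r \<phi> j = 0" .
  have "bcoord p q r \<phi> j = bcoord p q r f j"
    unfolding bcoord_def using local[of "(j, j - 1)"] local[of "(j, j)"] local[of "(j, Suc j)"] by simp
  also have "\<dots> = 0" unfolding f_def bcoord_sum using eta_coords(2) by (simp add: B_def)
  finally show "bcoord p q r \<phi> j = 0" .
qed

lemma eta_expansion_off_arcs:
  assumes hs: "\<And>e. ((\<lambda>k. c k * eta p q r k e) has_sum \<phi> e) (Kset r)" and e: "e \<notin> arcs r"
  shows "\<phi> e = 0"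
proof -
  have "\<phi> e = (\<Sum>k\<in>{k \<in> Kset r. k \<le> snd e}. c k * eta p q r k e)"
    using eta_expansion_value[OF hs] by simp
  also have "\<dots> = 0"
    by (rule sum.neutral) (use e eta_support(2)[of _ "fst e" "snd e"] in \<open>cases e, auto\<close>)
  finally show ?thesis .
qed

lemma eta_expansion_in_HS:
  assumes phi: "\<phi> \<in> ell2A r" and hs: "\<And>e. ((\<lambda>k. c k * eta p q r k e) has_sum \<phi> e) (Kset r)"
  shows "\<phi> \<in> HS p q r"
  unfolding HS_iff_coords using phi eta_expansion_coords[OF hs] by simp

text \<open>Second half: for \<open>\<phi> \<in> H\<^sup>(\<^sup>S\<^sup>)\<close> take \<open>c\<^sub>k = \<phi>(j\<^sub>k+1, j\<^sub>k) / \<eta>\<^sub>k(j\<^sub>k+1, j\<^sub>k)\<close>; the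
  difference of \<open>\<phi>\<close> and the expansion solves the coordinate equations and vanishes
  on the R-arcs of \<open>\<S>\<close>, so it vanishes by propagation.\<close>

lemma HS_has_eta_expansion:
  assumes hs: "\<phi> \<in> HS p q r"
  shows "\<exists>c. \<forall>e. ((\<lambda>k. c k * eta p q r k e) has_sum \<phi> e) (Kset r)"
proof -
  have phi: "\<phi> \<in> ell2A r" and coords: "\<And>j. acoord p q r \<phi> j = 0" "\<And>j. bcoord p q r \<phi> j = 0"
    using hs unfolding HS_iff_coords by auto
  define w where "w v = complex_of_real ((-1) ^ v * Qc p q v * sqrt (qt q v))" for v
  have w_nz: "w v \<noteq> 0" for v using Qc_pos[of v] qt_pos[of v] unfolding w_def by simp
  define c where "c k = \<phi> (Suc (sj r k), sj r k) / w (sj r k)" for k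
  define \<Phi> where "\<Phi> e = (\<Sum>k\<in>{k \<in> Kset r. k \<le> snd e}. c k * eta p q r k e)" for e
  have hs\<Phi>: "((\<lambda>k. c k * eta p q r k e) has_sum \<Phi> e) (Kset r)" for e
    unfolding \<Phi>_def by (rule eta_expansion_finite) simp
  have R_arcs: "\<Phi> (Suc v, v) = \<phi> (Suc v, v)" if "r v > 0" for v
  proof -
    have v: "v \<in> Sset r" using that by (simp add: Sset_def)
    define k0 where "k0 = srank r v"
    have k0: "k0 \<in> Kset r" "sj r k0 = v" "k0 \<le> v"
      unfolding k0_def using srank_in_Kset[OF v] sj_srank[OF v] sj_ge[OF srank_in_Kset[OF v]] by auto
    have "\<Phi> (Suc v, v) = (\<Sum>k\<in>{k \<in> Kset r. k \<le> v}. (if k = k0 then c k * w v else 0))"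
      unfolding \<Phi>_def using eta_R_arc[OF _ v] by (intro sum.cong) (auto simp: w_def k0_def)
    also have "\<dots> = c k0 * w v" using k0 by (simp add: sum.delta)
    also have "\<dots> = \<phi> (Suc v, v)" using w_nz k0 unfolding c_def by simp
    finally show ?thesis .
  qed
  have "(\<lambda>e. \<phi> e - \<Phi> e) = (\<lambda>e. 0)"
  proof (rule zero_by_propagation)
    show "acoord p q r (\<lambda>e. \<phi> e - \<Phi> e) j = 0" "bcoord p q r (\<lambda>e. \<phi> e - \<Phi> e) j = 0" for j
      unfolding acoord_diff bcoord_diff using coords eta_expansion_coords[OF hs\<Phi>] by simp_all
    show "\<phi> e - \<Phi> e = 0" if off: "e \<notin> arcs r" for e
      using ell2A_off_arcs[OF phi off] eta_expansion_off_arcs[OF hs\<Phi> off] by simp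
    show "\<phi> (Suc v, v) - \<Phi> (Suc v, v) = 0" if "r v > 0" for v
      using R_arcs[OF that] by simp
  qed
  then have "\<Phi> = \<phi>" by (simp add: fun_eq_iff)
  then show ?thesis using hs\<Phi> by auto
qed

text \<open>Without O-arcs there are no \<open>\<eta>\<^sub>k\<close>, so \<open>H\<^sup>(\<^sup>S\<^sup>)\<close> is trivial.\<close>

lemma HS_trivial:
  assumes "Sset r = {}"
  shows "HS p q r = {(\<lambda>e. 0)}"
proof -
  have K: "Kset r = {}" using assms unfolding Kset_def by simp
  have "\<phi> = (\<lambda>e. 0)" if hs: "\<phi> \<in> HS p q r" for \<phi>
  proof -
    obtain c where "\<forall>e. ((\<lambda>k. c k * eta p q r k e) has_sum \<phi> e) (Kset r)"
      using HS_has_eta_expansion[OF hs] by blast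
    then have "((\<lambda>k. c k * eta p q r k e) has_sum \<phi> e) {}" for e unfolding K by blast
    then have "\<phi> e = 0" for e using has_sum_unique[OF _ has_sum_empty] by blast
    then show ?thesis by auto
  qed
  moreover have "(\<lambda>e. 0) \<in> HS p q r"
    unfolding HS_iff_coords ell2A_def acoord_def bcoord_def by simp
  ultimately show ?thesis by blast
qed

text \<open>Eigenvalue \<open>-1\<close>: \<open>\<eta>\<^sub>k\<close> is orthogonal to the span of the \<open>a\<^sub>j\<close>, so \<open>\<Pi>\<^sub>A \<eta>\<^sub>k = 0\<close>,
  and \<open>S \<eta>\<^sub>k = \<eta>\<^sub>k\<close>; hence \<open>U \<eta>\<^sub>k = S(-\<eta>\<^sub>k) = -\<eta>\<^sub>k\<close>.\<close>

lemma eta_eigen: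
  assumes k: "k \<in> Kset r" and el: "eta p q r k \<in> ell2A r"
  shows "Uop p q r (eta p q r k) = (\<lambda>e. - eta p q r k e)"
proof -
  have "inner2 g (eta p q r k) = 0" if "g \<in> cspan r (range (avec p q r))" for g
    using that
  proof (rule cspan_orth[OF el, rotated])
    fix x assume "x \<in> range (avec p q r)"
    then show "finite (supp x) \<and> inner2 x (eta p q r k) = 0"
      using supp_avec inner_avec eta_coords(1)[OF k] by auto
  qed
  then have proj0: "proj r (range (avec p q r)) (eta p q r k) = (\<lambda>e. 0)"
    by (rule proj_zero[OF el])
  show ?thesis
  proof
    fix e :: "nat \<times> nat"
    have "eta p q r k (snd e, fst e) = eta p q r k e"
      using fun_cong[OF eta_shift_invariant[OF k], of e] by (simp add: shift_def case_prod_beta)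
    then show "Uop p q r (eta p q r k) e = - eta p q r k e"
      unfolding Uop_def proj0 by (simp add: shift_def case_prod_beta)
  qed
qed

end

theorem lemma3:
  fixes p q r :: "nat \<Rightarrow> real"
  assumes nonneg: "\<And>j. p j \<ge> 0 \<and> q j \<ge> 0 \<and> r j \<ge> 0"
    and sum1: "\<And>j. p j + q j + r j = 1"
    and q0: "q 0 = 0"
    and ppos: "\<And>j. p j > 0"
    and qpos: "\<And>j. j \<ge> 1 \<Longrightarrow> q j > 0"
  shows "(\<forall>\<phi> \<in> ell2A r. \<phi> \<in> HS p q r \<longleftrightarrow>
            (\<exists>c :: nat \<Rightarrow> complex. \<forall>e. ((\<lambda>k. c k * eta p q r k e) has_sum \<phi> e) (Kset r)))
       \<and> (Sset r = {} \<longrightarrow> HS p q r = {(\<lambda>e. 0)})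
       \<and> (\<forall>k \<in> Kset r. eta p q r k \<in> ell2A r \<longrightarrow> Uop p q r (eta p q r k) = (\<lambda>e. - eta p q r k e))"
proof -
  interpret walk p q r by unfold_locales (use nonneg q0 ppos qpos in auto)
  have char: "\<phi> \<in> HS p q r \<longleftrightarrow> (\<exists>c. \<forall>e. ((\<lambda>k. c k * eta p q r k e) has_sum \<phi> e) (Kset r))"
    if "\<phi> \<in> ell2A r" for \<phi>
    using that HS_has_eta_expansion eta_expansion_in_HS by blast
  show ?thesis
    using char HS_trivial eta_eigen by (intro conjI ballI impI) simp_all
qed

end
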